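(* Let $Q=ABA'B'$ be a quadrilateral in $K^2$ (possibly improper), let $(h,k)$ be the centroid of $Q$, and let $(a,b)\in K^2$ be a diagonal point of $Q$ that is not at infinity. Then the bisector locus of $Q$ is given by $$\Phi_Q(X-h,Y-k)=\Phi_Q(a-h,b-k),$$ i.e. it is the set of $(x,y)\in K^2$ with $\Phi_Q(x-h,y-k)=\Phi_Q(a-h,b-k)$. Thus the bisector locus is a conic with center $(h,k)$.
   Context: $K$ is a field of characteristic $\neq 2$, and we work in the affine plane $K^2$ (regarded inside the projective plane, so lines have points at infinity). Every line $L$ has an equation $tX-uY+v=0$ normalized so that $t=1$ if $u=0$ and $u=1$ if $u\neq 0$; these coefficients are denoted $t_L,u_L,v_L$. A quadrilateral $Q=ABA'B'$ consists of four distinct lines $A,B,A',B'$ (the sides), not all through one point, such that adjacent sides ($A,B$; $B,A'$; $A',B'$; $B',A$) are not parallel; opposite sides ($A,A'$ and $B,B'$) may be parallel. The vertices are $A\cap B$, $B\cap A'$, $A'\cap B'$, $B'\cap A$; three sides may pass through a common point (then two vertices coincide and $Q$ is called improper; otherwise proper). The diagonals are the lines through nonadjacent vertices ($A\cap B$ and $A'\cap B'$; $B\cap A'$ and $B'\cap A$). The centroid is the midpoint of the midpoints of the diagonals (equivalently, the average of the four vertices). A diagonal point of $Q$ is the intersection point (possibly at infinity) of a pair of opposite sides or of the two diagonals. Define $\alpha=t_Au_Bu_{A'}u_{B'}-u_At_Bu_{A'}u_{B'}+u_Au_Bt_{A'}u_{B'}-u_Au_Bu_{A'}t_{B'}$,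 $\beta=t_Au_Bt_{A'}u_{B'}-u_At_Bu_{A'}t_{B'}$, $\gamma=t_At_Bt_{A'}u_{B'}-t_At_Bu_{A'}t_{B'}+t_Au_Bt_{A'}t_{B'}-u_At_Bt_{A'}t_{B'}$, and the quadratic form $\Phi_Q(X,Y)=\gamma X^2-2\beta XY+\alpha Y^2$. A line $\ell$ crosses a pair of lines $\{\ell_1,\ell_2\}$ if $\ell$ is distinct from both and not parallel to both; then $\mathrm{mid}_{\{\ell_1,\ell_2\}}(\ell)$ is the midpoint of the two points where $\ell$ meets $\ell_1$ and $\ell_2$, except that if one of these points is at infinity it is defined to be the point at infinity of $\ell$. A line $\ell$ bisects $Q$ if $\mathrm{mid}_{\mathsf P}(\ell)=\mathrm{mid}_{\mathsf P'}(\ell)$ for all pairs $\mathsf P,\mathsf P'$ among the two pairs of opposite sides $\{A,A'\},\{B,B'\}$ that $\ell$ crosses; this common point is the midpoint $\mathrm{mid}_Q(\ell)$ of the bisector $\ell$. The bisector locus of $Q$ is the set of midpoints of the bisectors of $Q$. *)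

theory Defs
  imports Main
begin

text \<open>Lines of the affine plane K^2 are represented by their normalized coefficient
  triples (t, u, v): the line is t X - u Y + v = 0, with t = 1 if u = 0 and u = 1 if u \<noteq> 0.\<close>

type_synonym 'a line = "'a \<times> 'a \<times> 'a"
type_synonym 'a point = "'a \<times> 'a"

definition tL :: "'a line \<Rightarrow> 'a" where "tL L = fst L"
definition uL :: "'a line \<Rightarrow> 'a" where "uL L = fst (snd L)"
definition vL :: "'a line \<Rightarrow> 'a" where "vL L = snd (snd L)"

definition is_line :: "('a::field) line \<Rightarrow> bool" where
  "is_line L \<longleftrightarrow> (uL L = 0 \<and> tL L = 1) \<or> uL L = 1"

definition on_line :: "('a::field) line \<Rightarrow> 'a point \<Rightarrow> bool" where
  "on_line L p \<longleftrightarrow> tL L * fst p - uL L * snd p + vL L = 0"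

text \<open>Parallel (same direction; equal lines count as parallel too, which is harmless
  since the definitions below only apply it to distinct lines or also require distinctness).\<close>
definition parallel :: "('a::field) line \<Rightarrow> 'a line \<Rightarrow> bool" where
  "parallel L M \<longleftrightarrow> tL L * uL M - uL L * tL M = 0"

definition meet :: "('a::field) line \<Rightarrow> 'a line \<Rightarrow> 'a point" where
  "meet L M = (THE p. on_line L p \<and> on_line M p)"

text \<open>Points of the projective plane: affine points and points at infinity;
  the point at infinity of a line L is represented by its (normalized) direction data (t_L,u_L).\<close>
datatype 'a ppoint = Aff "'a \<times> 'a" | Inf "'a \<times> 'a"

definition inf_pt :: "('a::field) line \<Rightarrow> 'a ppoint" where
  "inf_pt L = Inf (tL L, uL L)"

definition quadrilateral :: "('a::field) line \<Rightarrow> 'a line \<Rightarrow> 'a line \<Rightarrow> 'a line \<Rightarrow> bool" where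
  "quadrilateral A B A' B' \<longleftrightarrow>
     is_line A \<and> is_line B \<and> is_line A' \<and> is_line B' \<and>
     distinct [A, B, A', B'] \<and>
     \<not> (\<exists>p. on_line A p \<and> on_line B p \<and> on_line A' p \<and> on_line B' p) \<and>
     \<not> parallel A B \<and> \<not> parallel B A' \<and> \<not> parallel A' B' \<and> \<not> parallel B' A"

definition vertices :: "('a::field) line \<Rightarrow> 'a line \<Rightarrow> 'a line \<Rightarrow> 'a line \<Rightarrow> 'a point list" where
  "vertices A B A' B' = [meet A B, meet B A', meet A' B', meet B' A]"

definition centroid :: "('a::field) line \<Rightarrow> 'a line \<Rightarrow> 'a line \<Rightarrow> 'a line \<Rightarrow> 'a point" where
  "centroid A B A' B' =
     (let vs = vertices A B A' B'
      in ((\<Sum>p\<leftarrow>vs. fst p) / 4, (\<Sum>p\<leftarrow>vs. snd p) / 4))"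

definition on_line_thru :: "('a::field) point \<Rightarrow> 'a point \<Rightarrow> 'a point \<Rightarrow> bool" where
  "on_line_thru p q r \<longleftrightarrow>
     (fst q - fst p) * (snd r - snd p) - (snd q - snd p) * (fst r - fst p) = 0"

text \<open>Affine (i.e. not at infinity) diagonal points: the intersection of a pair of opposite
  sides, or of the two diagonals, when it is a point of K^2.\<close>
definition affine_diagonal_point ::
  "('a::field) line \<Rightarrow> 'a line \<Rightarrow> 'a line \<Rightarrow> 'a line \<Rightarrow> 'a point \<Rightarrow> bool" where
  "affine_diagonal_point A B A' B' p \<longleftrightarrow>
     (on_line A p \<and> on_line A' p) \<or>
     (on_line B p \<and> on_line B' p) \<or>
     (on_line_thru (meet A B) (meet A' B') p \<and> on_line_thru (meet B A') (meet B' A) p)"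

definition alphaQ :: "('a::field) line \<Rightarrow> 'a line \<Rightarrow> 'a line \<Rightarrow> 'a line \<Rightarrow> 'a" where
  "alphaQ A B A' B' =
     tL A * uL B * uL A' * uL B' - uL A * tL B * uL A' * uL B'
     + uL A * uL B * tL A' * uL B' - uL A * uL B * uL A' * tL B'"

definition betaQ :: "('a::field) line \<Rightarrow> 'a line \<Rightarrow> 'a line \<Rightarrow> 'a line \<Rightarrow> 'a" where
  "betaQ A B A' B' = tL A * uL B * tL A' * uL B' - uL A * tL B * uL A' * tL B'"

definition gammaQ :: "('a::field) line \<Rightarrow> 'a line \<Rightarrow> 'a line \<Rightarrow> 'a line \<Rightarrow> 'a" where
  "gammaQ A B A' B' =
     tL A * tL B * tL A' * uL B' - tL A * tL B * uL A' * tL B'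
     + tL A * uL B * tL A' * tL B' - uL A * tL B * tL A' * tL B'"

definition PhiQ :: "('a::field) line \<Rightarrow> 'a line \<Rightarrow> 'a line \<Rightarrow> 'a line \<Rightarrow> 'a \<Rightarrow> 'a \<Rightarrow> 'a" where
  "PhiQ A B A' B' X Y =
     gammaQ A B A' B' * X^2 - 2 * betaQ A B A' B' * X * Y + alphaQ A B A' B' * Y^2"

definition crosses :: "('a::field) line \<Rightarrow> 'a line \<Rightarrow> 'a line \<Rightarrow> bool" where
  "crosses l L1 L2 \<longleftrightarrow> l \<noteq> L1 \<and> l \<noteq> L2 \<and> \<not> (parallel l L1 \<and> parallel l L2)"

definition mid_pair :: "('a::field) line \<Rightarrow> 'a line \<Rightarrow> 'a line \<Rightarrow> 'a ppoint" where
  "mid_pair L1 L2 l =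
     (if parallel l L1 \<or> parallel l L2 then inf_pt l
      else (let p = meet l L1; q = meet l L2
            in Aff ((fst p + fst q) / 2, (snd p + snd q) / 2)))"

definition bisects :: "('a::field) line \<Rightarrow> 'a line \<Rightarrow> 'a line \<Rightarrow> 'a line \<Rightarrow> 'a line \<Rightarrow> bool" where
  "bisects A B A' B' l \<longleftrightarrow> is_line l \<and>
     (crosses l A A' \<and> crosses l B B' \<longrightarrow> mid_pair A A' l = mid_pair B B' l)"

definition bisector_mid ::
  "('a::field) line \<Rightarrow> 'a line \<Rightarrow> 'a line \<Rightarrow> 'a line \<Rightarrow> 'a line \<Rightarrow> 'a ppoint \<Rightarrow> bool" where
  "bisector_mid A B A' B' l P \<longleftrightarrow> bisects A B A' B' l \<and>
     ((crosses l A A' \<and> P = mid_pair A A' l) \<or> (crosses l B B' \<and> P = mid_pair B B' l))"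

definition bisector_locus :: "('a::field) line \<Rightarrow> 'a line \<Rightarrow> 'a line \<Rightarrow> 'a line \<Rightarrow> 'a ppoint set" where
  "bisector_locus A B A' B' = {P. \<exists>l. bisector_mid A B A' B' l P}"

end

theory Submission
  imports Defs
begin

text \<open>
  The line through a point P with direction d meets lines L1 and L2 at the parameters
  -L1(P)/n1(d) and -L2(P)/n2(d), where L(P) is the value of the equation of L at P and n(d) its
  linear part at d. So P is the midpoint of that chord iff L1(P) n2(d) + L2(P) n1(d) = 0, and P is
  the midpoint of a bisector iff the two linear forms in d obtained from the pairs of opposite
  sides have a common nonzero zero, i.e. iff their determinant D(P) vanishes.

  D is quadratic in P with quadratic part -2 Phi_Q, and the incidences of the four vertices make
  it symmetric about the centroid c, so D(P) = D(c) - 2 Phi_Q(P - c). It remains to see that D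
  vanishes at every diagonal point. On two opposite sides this is immediate. Where the diagonals of
  a proper quadrilateral cross, the two linear forms are proportional; for an improper one the
  diagonals meet at the double vertex, which lies on two opposite sides.
\<close>

text \<open>The direction of a line l is the vector (uL l, tL l), and dir_form L d vanishes iff
  d is a direction of L.\<close>

definition line_eval :: "('a::field) line \<Rightarrow> 'a point \<Rightarrow> 'a" where
  "line_eval L p = tL L * fst p - uL L * snd p + vL L"

definition dir_form :: "('a::field) line \<Rightarrow> 'a point \<Rightarrow> 'a" where
  "dir_form L d = tL L * fst d - uL L * snd d"

definition mid_form :: "('a::field) line \<Rightarrow> 'a line \<Rightarrow> 'a point \<Rightarrow> 'a point \<Rightarrow> 'a" where
  "mid_form L1 L2 p d = line_eval L1 p * dir_form L2 d + line_eval L2 p * dir_form L1 d"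

definition bisector_det :: "('a::field) line \<Rightarrow> 'a line \<Rightarrow> 'a line \<Rightarrow> 'a line \<Rightarrow> 'a point \<Rightarrow> 'a" where
  "bisector_det A B A' B' p =
     mid_form A A' p (1, 0) * mid_form B B' p (0, 1) - mid_form A A' p (0, 1) * mid_form B B' p (1, 0)"

section \<open>Lines and their intersections\<close>

lemma on_line_iff_line_eval: "on_line L p \<longleftrightarrow> line_eval L p = 0"
  by (simp add: on_line_def line_eval_def)

lemma line_eval_along:
  "line_eval L (fst p + s * fst d, snd p + s * snd d) = line_eval L p + s * dir_form L d"
  by (simp add: line_eval_def dir_form_def algebra_simps)

lemma mid_form_commute: "mid_form L2 L1 p d = mid_form L1 L2 p d"
  by (simp add: mid_form_def add.commute)

lemma mid_form_linear:
  "mid_form L1 L2 p d = fst d * mid_form L1 L2 p (1, 0) + snd d * mid_form L1 L2 p (0, 1)"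
  by (simp add: mid_form_def dir_form_def algebra_simps)

lemma parallel_iff_dir_form: "parallel l L \<longleftrightarrow> dir_form L (uL l, tL l) = 0"
  by (auto simp: parallel_def dir_form_def algebra_simps)

lemma parallel_refl: "parallel L L"
  by (simp add: parallel_def mult.commute)

lemma parallel_sym: "parallel L M \<longleftrightarrow> parallel M L"
  by (auto simp: parallel_def algebra_simps)

lemma is_line_direction_nonzero: "is_line l \<Longrightarrow> (uL l, tL l) \<noteq> (0, 0)"
  by (auto simp: is_line_def)

lemma parallel_same_direction:
  "is_line L \<Longrightarrow> is_line M \<Longrightarrow> parallel L M \<Longrightarrow> tL L = tL M \<and> uL L = uL M"
  by (auto simp: is_line_def parallel_def)

lemma parallel_trans:
  assumes "is_line l" "is_line L" "is_line M" "parallel l L" "parallel l M"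
  shows "parallel L M"
  using parallel_same_direction[OF assms(1,2,4)] parallel_same_direction[OF assms(1,3,5)]
  by (simp add: parallel_def mult.commute)

lemma parallel_common_point_eq:
  assumes "is_line L" "is_line M" "parallel L M" "on_line L p" "on_line M p"
  shows "L = M"
proof -
  from parallel_same_direction[OF assms(1-3)] have t: "tL L = tL M" and u: "uL L = uL M" by auto
  with assms(4,5) have "vL L = vL M" unfolding on_line_def by algebra
  with t u show ?thesis by (simp add: prod_eq_iff tL_def uL_def vL_def)
qed

lemma common_point_unique:
  assumes "\<not> parallel L M" "on_line L p" "on_line M p" "on_line L q" "on_line M q"
  shows "p = q"
proof -
  have "(tL L * uL M - uL L * tL M) * (fst q - fst p) = 0"
    and "(tL L * uL M - uL L * tL M) * (snd q - snd p) = 0"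
    using assms(2-5) unfolding on_line_def by algebra+
  with assms(1) show ?thesis by (simp add: parallel_def prod_eq_iff)
qed

lemma common_point_exists:
  assumes "\<not> parallel L M"
  shows "\<exists>p. on_line L p \<and> on_line M p"
proof -
  define d where "d = tL L * uL M - uL L * tL M"
  define x where "x = uL L * vL M - vL L * uL M"
  define y where "y = tL L * vL M - tL M * vL L"
  have "d \<noteq> 0" using assms by (simp add: d_def parallel_def)
  then have "on_line N (x / d, y / d) \<longleftrightarrow> tL N * x - uL N * y + vL N * d = 0" for N
    by (simp add: on_line_def field_simps)
  moreover have "tL L * x - uL L * y + vL L * d = 0" "tL M * x - uL M * y + vL M * d = 0"
    unfolding x_def y_def d_def by algebra+
  ultimately show ?thesis by blast
qed

lemma on_line_meet:
  assumes "\<not> parallel L M"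
  shows "on_line L (meet L M)" and "on_line M (meet L M)"
proof -
  obtain p where p: "on_line L p \<and> on_line M p" using common_point_exists[OF assms] by blast
  have "on_line L (meet L M) \<and> on_line M (meet L M)"
    unfolding meet_def by (rule theI[of _ p]) (use p common_point_unique[OF assms] in blast)+
  then show "on_line L (meet L M)" "on_line M (meet L M)" by auto
qed

lemma meet_eq:
  "\<not> parallel L M \<Longrightarrow> on_line L p \<Longrightarrow> on_line M p \<Longrightarrow> meet L M = p"
  using common_point_unique on_line_meet by metis

lemma meet_along:
  assumes "\<not> parallel l L" "on_line l p" "s * dir_form L (uL l, tL l) = - line_eval L p"
  shows "meet l L = (fst p + s * uL l, snd p + s * tL l)"
proof (rule meet_eq[OF assms(1)])
  have "dir_form l (uL l, tL l) = 0" using parallel_refl parallel_iff_dir_form by blast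
  then show "on_line l (fst p + s * uL l, snd p + s * tL l)"
    using assms(2) line_eval_along[of l p s "(uL l, tL l)"] by (simp add: on_line_iff_line_eval)
  show "on_line L (fst p + s * uL l, snd p + s * tL l)"
    using assms(3) line_eval_along[of L p s "(uL l, tL l)"] by (simp add: on_line_iff_line_eval)
qed

section \<open>Midpoints of chords and bisectors\<close>

lemma midpoint_on_line:
  fixes l :: "('a::field) line"
  assumes "(2::'a) \<noteq> 0" "on_line l p" "on_line l q"
  shows "on_line l ((fst p + fst q) / 2, (snd p + snd q) / 2)"
proof -
  have "line_eval l ((fst p + fst q) / 2, (snd p + snd q) / 2) = (line_eval l p + line_eval l q) / 2"
    using assms(1) by (simp add: line_eval_def divide_simps) algebra
  with assms show ?thesis by (simp add: on_line_iff_line_eval)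
qed

lemma mid_pair_eq_Aff_iff:
  fixes l L1 L2 :: "('a::field) line"
  assumes two: "(2::'a) \<noteq> 0" and l: "is_line l"
    and n1: "\<not> parallel l L1" and n2: "\<not> parallel l L2"
  shows "mid_pair L1 L2 l = Aff P \<longleftrightarrow> on_line l P \<and> mid_form L1 L2 P (uL l, tL l) = 0"
proof -
  have mid: "mid_pair L1 L2 l = Aff ((fst (meet l L1) + fst (meet l L2)) / 2,
                                     (snd (meet l L1) + snd (meet l L2)) / 2)"
    using n1 n2 by (simp add: mid_pair_def Let_def)
  show ?thesis
  proof (cases "on_line l P")
    case False
    then show ?thesis
      using mid midpoint_on_line[OF two on_line_meet(1)[OF n1] on_line_meet(1)[OF n2]] by auto
  next
    case True
    define c1 c2 where "c1 = dir_form L1 (uL l, tL l)" and "c2 = dir_form L2 (uL l, tL l)"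
    have c: "c1 \<noteq> 0" "c2 \<noteq> 0"
      using n1 n2 by (simp_all add: c1_def c2_def parallel_iff_dir_form)
    define s1 s2 where "s1 = - line_eval L1 P / c1" and "s2 = - line_eval L2 P / c2"
    have "meet l L1 = (fst P + s1 * uL l, snd P + s1 * tL l)"
      by (rule meet_along[OF n1 True]) (simp add: s1_def c1_def[symmetric] c)
    moreover have "meet l L2 = (fst P + s2 * uL l, snd P + s2 * tL l)"
      by (rule meet_along[OF n2 True]) (simp add: s2_def c2_def[symmetric] c)
    ultimately have
      "mid_pair L1 L2 l = Aff (fst P + (s1 + s2) / 2 * uL l, snd P + (s1 + s2) / 2 * tL l)"
      using mid two by (simp add: divide_simps algebra_simps)
    then have "mid_pair L1 L2 l = Aff P \<longleftrightarrow> s1 + s2 = 0"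
      using is_line_direction_nonzero[OF l] two by (auto simp: prod_eq_iff)
    also have "s1 + s2 = - mid_form L1 L2 P (uL l, tL l) / (c1 * c2)"
      using c by (simp add: s1_def s2_def mid_form_def c1_def c2_def field_simps)
    finally show ?thesis using True c by simp
  qed
qed

lemma mid_form_ne_0_if_parallel:
  assumes "is_line l" "is_line L1" "on_line l P" "l \<noteq> L1"
    and "parallel l L1" "\<not> parallel l L2"
  shows "mid_form L1 L2 P (uL l, tL l) \<noteq> 0"
proof -
  have "\<not> on_line L1 P" using parallel_common_point_eq assms(1-5) by blast
  then show ?thesis
    using assms(5,6) by (simp add: mid_form_def parallel_iff_dir_form on_line_iff_line_eval)
qed

lemma crossing_mid_pair_eq_Aff_iff:
  fixes l L1 L2 :: "('a::field) line"
  assumes two: "(2::'a) \<noteq> 0" and lines: "is_line l" "is_line L1" "is_line L2"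
    and cr: "crosses l L1 L2" and P: "on_line l P"
  shows "mid_pair L1 L2 l = Aff P \<longleftrightarrow> mid_form L1 L2 P (uL l, tL l) = 0"
proof (cases "parallel l L1 \<or> parallel l L2")
  case par: True
  then have "mid_pair L1 L2 l \<noteq> Aff P" by (simp add: mid_pair_def inf_pt_def)
  moreover have "mid_form L1 L2 P (uL l, tL l) \<noteq> 0"
  proof (cases "parallel l L1")
    case True
    with cr have "\<not> parallel l L2" "l \<noteq> L1" by (auto simp: crosses_def)
    with True show ?thesis using mid_form_ne_0_if_parallel[OF lines(1,2) P] by blast
  next
    case False
    with par cr have "parallel l L2" "l \<noteq> L2" by (auto simp: crosses_def)
    with False show ?thesis
      using mid_form_ne_0_if_parallel[OF lines(1,3) P, of L1] by (simp add: mid_form_commute)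
  qed
  ultimately show ?thesis by simp
next
  case False
  then show ?thesis using mid_pair_eq_Aff_iff[OF two lines(1)] P by simp
qed

lemma mid_form_eq_0_if_not_crosses:
  assumes "on_line l P" "\<not> crosses l L1 L2"
  shows "mid_form L1 L2 P (uL l, tL l) = 0"
  using assms parallel_refl[of l]
  by (auto simp: crosses_def mid_form_def parallel_iff_dir_form on_line_iff_line_eval)

lemma crosses_some_opposite_pair:
  assumes quad: "quadrilateral A B A' B'" and l: "is_line l"
  shows "crosses l A A' \<or> crosses l B B'"
proof (rule ccontr)
  have lines: "is_line A" "is_line B" "is_line A'" "is_line B'"
    and np: "\<not> parallel A B" "\<not> parallel A' B" "\<not> parallel A' B'" "\<not> parallel A B'"
    using quad parallel_sym unfolding quadrilateral_def by blast+
  assume "\<not> (crosses l A A' \<or> crosses l B B')"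
  then have "parallel l A \<or> parallel l A'" and "parallel l B \<or> parallel l B'"
    using parallel_refl unfolding crosses_def by metis+
  then show False
    using parallel_trans[OF l lines(1,2)] parallel_trans[OF l lines(1,4)]
      parallel_trans[OF l lines(3,2)] parallel_trans[OF l lines(3,4)] np by blast
qed

lemma bisector_mid_pair:
  fixes l L1 L2 M1 M2 :: "('a::field) line"
  assumes two: "(2::'a) \<noteq> 0"
    and lines: "is_line l" "is_line L1" "is_line L2" "is_line M1" "is_line M2"
    and np: "\<not> parallel L1 M1" "\<not> parallel L1 M2" "\<not> parallel L2 M1" "\<not> parallel L2 M2"
    and cr: "crosses l L1 L2"
    and bis: "crosses l M1 M2 \<longrightarrow> mid_pair L1 L2 l = mid_pair M1 M2 l"
  shows "\<exists>P. mid_pair L1 L2 l = Aff P \<and> on_line l P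
             \<and> mid_form L1 L2 P (uL l, tL l) = 0 \<and> mid_form M1 M2 P (uL l, tL l) = 0"
proof -
  have "\<not> (parallel l L1 \<or> parallel l L2)"
  proof
    assume par: "parallel l L1 \<or> parallel l L2"
    then have "\<not> parallel l M1" "\<not> parallel l M2"
      using parallel_trans[OF lines(1,2,4)] parallel_trans[OF lines(1,2,5)]
        parallel_trans[OF lines(1,3,4)] parallel_trans[OF lines(1,3,5)] np by blast+
    moreover from this have "crosses l M1 M2" using parallel_refl by (metis crosses_def)
    ultimately show False using bis par by (simp add: mid_pair_def inf_pt_def Let_def)
  qed
  then have n: "\<not> parallel l L1" "\<not> parallel l L2" by auto
  then obtain P where P: "mid_pair L1 L2 l = Aff P" by (simp add: mid_pair_def Let_def)
  then have "on_line l P" and "mid_form L1 L2 P (uL l, tL l) = 0"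
    using mid_pair_eq_Aff_iff[OF two lines(1) n] by auto
  moreover have "mid_form M1 M2 P (uL l, tL l) = 0"
  proof (cases "crosses l M1 M2")
    case True
    then show ?thesis
      using bis P crossing_mid_pair_eq_Aff_iff[OF two lines(1,4,5) _ \<open>on_line l P\<close>] by simp
  next
    case False
    then show ?thesis using mid_form_eq_0_if_not_crosses \<open>on_line l P\<close> by blast
  qed
  ultimately show ?thesis using P by blast
qed

lemma bisector_mid_iff:
  fixes A B A' B' :: "('a::field) line"
  assumes two: "(2::'a) \<noteq> 0" and quad: "quadrilateral A B A' B'"
  shows "bisector_mid A B A' B' l Pt \<longleftrightarrow>
    (\<exists>P. Pt = Aff P \<and> is_line l \<and> on_line l P
         \<and> mid_form A A' P (uL l, tL l) = 0 \<and> mid_form B B' P (uL l, tL l) = 0)"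
proof
  have lines: "is_line A" "is_line B" "is_line A'" "is_line B'"
    and np: "\<not> parallel A B" "\<not> parallel A B'" "\<not> parallel A' B" "\<not> parallel A' B'"
    using quad parallel_sym unfolding quadrilateral_def by blast+
  then have np': "\<not> parallel B A" "\<not> parallel B A'" "\<not> parallel B' A" "\<not> parallel B' A'"
    using parallel_sym by blast+
  assume bm: "bisector_mid A B A' B' l Pt"
  then have l: "is_line l"
    and bis: "crosses l A A' \<and> crosses l B B' \<longrightarrow> mid_pair A A' l = mid_pair B B' l"
    unfolding bisector_mid_def bisects_def by auto
  from bm consider "crosses l A A'" "Pt = mid_pair A A' l" | "crosses l B B'" "Pt = mid_pair B B' l"
    unfolding bisector_mid_def by blast
  then show "\<exists>P. Pt = Aff P \<and> is_line l \<and> on_line l P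
         \<and> mid_form A A' P (uL l, tL l) = 0 \<and> mid_form B B' P (uL l, tL l) = 0"
  proof cases
    case 1
    then show ?thesis using bisector_mid_pair[OF two l lines(1,3,2,4) np] bis l by auto
  next
    case 2
    then show ?thesis using bisector_mid_pair[OF two l lines(2,4,1,3) np'] bis l by auto
  qed
next
  assume "\<exists>P. Pt = Aff P \<and> is_line l \<and> on_line l P
            \<and> mid_form A A' P (uL l, tL l) = 0 \<and> mid_form B B' P (uL l, tL l) = 0"
  then obtain P where P: "Pt = Aff P" "is_line l" "on_line l P"
    "mid_form A A' P (uL l, tL l) = 0" "mid_form B B' P (uL l, tL l) = 0" by blast
  have lines: "is_line A" "is_line B" "is_line A'" "is_line B'"
    using quad unfolding quadrilateral_def by auto
  have "crosses l A A' \<Longrightarrow> mid_pair A A' l = Aff P"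
    using crossing_mid_pair_eq_Aff_iff[OF two P(2) lines(1,3) _ P(3)] P(4) by blast
  moreover have "crosses l B B' \<Longrightarrow> mid_pair B B' l = Aff P"
    using crossing_mid_pair_eq_Aff_iff[OF two P(2) lines(2,4) _ P(3)] P(5) by blast
  ultimately show "bisector_mid A B A' B' l Pt"
    using crosses_some_opposite_pair[OF quad P(2)] P(1,2)
    unfolding bisector_mid_def bisects_def by auto
qed

lemma common_zero_iff_det:
  fixes a1 a2 b1 b2 :: "'a::field"
  shows "(\<exists>d. d \<noteq> (0, 0) \<and> a1 * fst d + a2 * snd d = 0 \<and> b1 * fst d + b2 * snd d = 0)
           \<longleftrightarrow> a1 * b2 - a2 * b1 = 0"
proof
  assume "\<exists>d. d \<noteq> (0, 0) \<and> a1 * fst d + a2 * snd d = 0 \<and> b1 * fst d + b2 * snd d = 0"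
  then obtain d where d: "d \<noteq> (0, 0)" "a1 * fst d + a2 * snd d = 0" "b1 * fst d + b2 * snd d = 0"
    by blast
  have "(a1 * b2 - a2 * b1) * fst d = 0" "(a1 * b2 - a2 * b1) * snd d = 0"
    using d(2,3) by algebra+
  with d(1) show "a1 * b2 - a2 * b1 = 0" by (auto simp: prod_eq_iff)
next
  assume det: "a1 * b2 - a2 * b1 = 0"
  consider "(a1, a2) \<noteq> (0, 0)" | "(b1, b2) \<noteq> (0, 0)" | "a1 = 0" "a2 = 0" "b1 = 0" "b2 = 0"
    by auto
  then show "\<exists>d. d \<noteq> (0, 0) \<and> a1 * fst d + a2 * snd d = 0 \<and> b1 * fst d + b2 * snd d = 0"
  proof cases
    case 1
    have "b1 * a2 + b2 * - a1 = 0" using det by algebra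
    with 1 show ?thesis by (intro exI[of _ "(a2, - a1)"]) (auto simp: mult.commute)
  next
    case 2
    have "a1 * b2 + a2 * - b1 = 0" using det by algebra
    with 2 show ?thesis by (intro exI[of _ "(b2, - b1)"]) (auto simp: mult.commute)
  next
    case 3
    then show ?thesis by (intro exI[of _ "(1, 0)"]) simp
  qed
qed

lemma line_through_in_direction:
  assumes "d \<noteq> (0, 0)"
  shows "\<exists>l c. is_line l \<and> on_line l P \<and> uL l = c * fst d \<and> tL l = c * snd d"
proof (cases "fst d = 0")
  case True
  with assms have "snd d \<noteq> 0" by (auto simp: prod_eq_iff)
  with True show ?thesis
    by (intro exI[of _ "(1, 0, - fst P)"] exI[of _ "1 / snd d"])
      (simp add: is_line_def on_line_def tL_def uL_def vL_def)
next
  case False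
  then show ?thesis
    by (intro exI[of _ "(snd d / fst d, 1, snd P - snd d / fst d * fst P)"] exI[of _ "1 / fst d"])
      (simp add: is_line_def on_line_def tL_def uL_def vL_def)
qed

lemma bisector_det_eq_0_iff:
  "bisector_det A B A' B' P = 0 \<longleftrightarrow>
     (\<exists>l. is_line l \<and> on_line l P
          \<and> mid_form A A' P (uL l, tL l) = 0 \<and> mid_form B B' P (uL l, tL l) = 0)"
proof -
  have lin: "mid_form L1 L2 P d = 0 \<longleftrightarrow>
      mid_form L1 L2 P (1, 0) * fst d + mid_form L1 L2 P (0, 1) * snd d = 0" for L1 L2 d
    by (subst mid_form_linear) (simp add: mult.commute)
  have "bisector_det A B A' B' P = 0 \<longleftrightarrow>
      (\<exists>d. d \<noteq> (0, 0) \<and> mid_form A A' P d = 0 \<and> mid_form B B' P d = 0)"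
    unfolding bisector_det_def lin by (rule common_zero_iff_det[symmetric])
  also have "\<dots> \<longleftrightarrow> (\<exists>l. is_line l \<and> on_line l P
                  \<and> mid_form A A' P (uL l, tL l) = 0 \<and> mid_form B B' P (uL l, tL l) = 0)"
  proof
    assume "\<exists>d. d \<noteq> (0, 0) \<and> mid_form A A' P d = 0 \<and> mid_form B B' P d = 0"
    then obtain d where d: "d \<noteq> (0, 0)" "mid_form A A' P d = 0" "mid_form B B' P d = 0" by blast
    obtain l c where l: "is_line l" "on_line l P" "uL l = c * fst d" "tL l = c * snd d"
      using line_through_in_direction[OF d(1)] by blast
    then have "mid_form L1 L2 P (uL l, tL l) = c * mid_form L1 L2 P d" for L1 L2
      by (simp add: mid_form_def dir_form_def algebra_simps)
    with l(1,2) d(2,3) show "\<exists>l. is_line l \<and> on_line l P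
                  \<and> mid_form A A' P (uL l, tL l) = 0 \<and> mid_form B B' P (uL l, tL l) = 0"
      by (intro exI[of _ l]) simp
  next
    assume "\<exists>l. is_line l \<and> on_line l P
                  \<and> mid_form A A' P (uL l, tL l) = 0 \<and> mid_form B B' P (uL l, tL l) = 0"
    then show "\<exists>d. d \<noteq> (0, 0) \<and> mid_form A A' P d = 0 \<and> mid_form B B' P d = 0"
      using is_line_direction_nonzero by blast
  qed
  finally show ?thesis .
qed

lemma bisector_locus_eq_det_zeros:
  fixes A B A' B' :: "('a::field) line"
  assumes "(2::'a) \<noteq> 0" "quadrilateral A B A' B'"
  shows "bisector_locus A B A' B' = Aff ` {P. bisector_det A B A' B' P = 0}"
  unfolding bisector_locus_def bisector_mid_iff[OF assms] bisector_det_eq_0_iff by blast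

section \<open>The centre of the bisector conic\<close>

lemma bisector_det_even_part:
  "bisector_det A B A' B' (h + x, k + y) + bisector_det A B A' B' (h - x, k - y)
     = 2 * bisector_det A B A' B' (h, k) - 4 * PhiQ A B A' B' x y"
  unfolding bisector_det_def mid_form_def line_eval_def dir_form_def
    PhiQ_def alphaQ_def betaQ_def gammaQ_def fst_conv snd_conv
  by algebra

lemma bisector_det_symmetric_about_centroid:
  fixes A B A' B' :: "('a::field) line"
  assumes "on_line A p0" "on_line B p0" "on_line B p1" "on_line A' p1"
    "on_line A' p2" "on_line B' p2" "on_line B' p3" "on_line A p3"
    and "4 * h = fst p0 + fst p1 + fst p2 + fst p3" "4 * k = snd p0 + snd p1 + snd p2 + snd p3"
  shows "bisector_det A B A' B' (h + x, k + y) = bisector_det A B A' B' (h - x, k - y)"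
  using assms unfolding bisector_det_def mid_form_def on_line_def line_eval_def dir_form_def
    fst_conv snd_conv
  by algebra

lemma bisector_det_centroid:
  fixes A B A' B' :: "('a::field) line"
  assumes two: "(2::'a) \<noteq> 0" and quad: "quadrilateral A B A' B'"
    and cen: "centroid A B A' B' = (h, k)"
  shows "bisector_det A B A' B' (x, y)
           = bisector_det A B A' B' (h, k) - 2 * PhiQ A B A' B' (x - h) (y - k)"
proof -
  have np: "\<not> parallel A B" "\<not> parallel B A'" "\<not> parallel A' B'" "\<not> parallel B' A"
    using quad unfolding quadrilateral_def by auto
  have "(4::'a) = 2 * 2" by simp
  with two have "(4::'a) \<noteq> 0" by (metis mult_eq_0_iff)
  with cen have "4 * h = fst (meet A B) + fst (meet B A') + fst (meet A' B') + fst (meet B' A)"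
    and "4 * k = snd (meet A B) + snd (meet B A') + snd (meet A' B') + snd (meet B' A)"
    by (auto simp: centroid_def vertices_def add.assoc)
  with on_line_meet[OF np(1)] on_line_meet[OF np(2)] on_line_meet[OF np(3)] on_line_meet[OF np(4)]
  have "bisector_det A B A' B' (h + (x - h), k + (y - k))
      = bisector_det A B A' B' (h - (x - h), k - (y - k))"
    by (intro bisector_det_symmetric_about_centroid)
  with bisector_det_even_part[of A B A' B' h "x - h" k "y - k"]
  have "2 * bisector_det A B A' B' (x, y)
      = 2 * (bisector_det A B A' B' (h, k) - 2 * PhiQ A B A' B' (x - h) (y - k))"
    by (simp add: algebra_simps)
  with two show ?thesis by (metis mult_left_cancel)
qed

section \<open>Diagonal points\<close>

lemma bisector_det_eq_0_if_on_opposite_sides: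
  "(on_line A p \<and> on_line A' p) \<or> (on_line B p \<and> on_line B' p) \<Longrightarrow> bisector_det A B A' B' p = 0"
  by (auto simp: bisector_det_def mid_form_def on_line_iff_line_eval)

lemma on_line_thru_swap12: "on_line_thru q p r \<longleftrightarrow> on_line_thru p q r"
  unfolding on_line_thru_def by algebra

lemma on_line_thru_swap23: "on_line_thru p r q \<longleftrightarrow> on_line_thru p q r"
  unfolding on_line_thru_def by algebra

lemma on_line_if_on_line_thru:
  assumes "on_line L p" "on_line L q" "p \<noteq> q" "on_line_thru p q r"
  shows "on_line L r"
proof -
  have "tL L * (fst q - fst p) = uL L * (snd q - snd p)"
    using assms(1,2) unfolding on_line_def by algebra
  with assms(4) have "(tL L * (fst r - fst p) - uL L * (snd r - snd p)) * (fst q - fst p) = 0"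
    and "(tL L * (fst r - fst p) - uL L * (snd r - snd p)) * (snd q - snd p) = 0"
    unfolding on_line_thru_def by algebra+
  with assms(3) have "tL L * (fst r - fst p) - uL L * (snd r - snd p) = 0"
    by (auto simp: prod_eq_iff)
  with assms(1) show ?thesis unfolding on_line_def by algebra
qed

lemma on_line_thru_param:
  assumes "p \<noteq> q" "on_line_thru p q r"
  shows "\<exists>s. fst r - fst p = s * (fst q - fst p) \<and> snd r - snd p = s * (snd q - snd p)"
proof (cases "fst q = fst p")
  case True
  with assms have "snd q - snd p \<noteq> 0" "fst r = fst p" by (auto simp: prod_eq_iff on_line_thru_def)
  with True show ?thesis by (intro exI[of _ "(snd r - snd p) / (snd q - snd p)"]) simp
next
  case False
  with assms(2) show ?thesis
    by (intro exI[of _ "(fst r - fst p) / (fst q - fst p)"]) (simp add: on_line_thru_def field_simps)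
qed

lemma on_line_thru_unique_meet:
  assumes "\<not> on_line_thru p q r" "on_line_thru p q z" "on_line_thru p r z"
  shows "z = p"
proof -
  let ?k = "(fst q - fst p) * (snd r - snd p) - (snd q - snd p) * (fst r - fst p)"
  have "?k * (fst z - fst p) = 0" "?k * (snd z - snd p) = 0"
    using assms(2,3) unfolding on_line_thru_def by algebra+
  with assms(1) show ?thesis by (simp add: on_line_thru_def prod_eq_iff)
qed

lemma vertex_not_on_line_thru_neighbours:
  assumes "\<not> parallel L M" "on_line L p" "on_line L v" "on_line M v" "on_line M q"
    and "p \<noteq> v" "q \<noteq> v"
  shows "\<not> on_line_thru p q v"
proof
  assume "on_line_thru p q v"
  then have "on_line L q"
    using on_line_if_on_line_thru[OF assms(2,3,6)] on_line_thru_swap23 by blast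
  then show False using common_point_unique[OF assms(1) _ assms(5)] assms(3,4,7) by blast
qed

lemma quadrilateral_rotate: "quadrilateral A B A' B' \<Longrightarrow> quadrilateral B A' B' A"
  unfolding quadrilateral_def by auto

lemma improper_diagonals_meet:
  assumes quad: "quadrilateral L1 L2 L3 L4" and eq: "meet L1 L2 = meet L2 L3"
    and d1: "on_line_thru (meet L1 L2) (meet L3 L4) z"
    and d2: "on_line_thru (meet L2 L3) (meet L4 L1) z"
  shows "z = meet L1 L2"
proof -
  have lines: "is_line L1" "is_line L3"
    and np: "\<not> parallel L1 L2" "\<not> parallel L2 L3" "\<not> parallel L3 L4" "\<not> parallel L4 L1"
    and dist: "L1 \<noteq> L3"
    and nc: "\<not> (\<exists>p. on_line L1 p \<and> on_line L2 p \<and> on_line L3 p \<and> on_line L4 p)"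
    using quad unfolding quadrilateral_def by auto
  define v w2 w3 where "v = meet L1 L2" and "w2 = meet L3 L4" and "w3 = meet L4 L1"
  have v: "on_line L1 v" "on_line L2 v" "on_line L3 v"
    using on_line_meet[OF np(1)] on_line_meet(2)[OF np(2)] eq unfolding v_def by auto
  have w2: "on_line L3 w2" "on_line L4 w2" and w3: "on_line L4 w3" "on_line L1 w3"
    using on_line_meet[OF np(3)] on_line_meet[OF np(4)] unfolding w2_def w3_def by auto
  have "v \<noteq> w2" "v \<noteq> w3" using nc v w2 w3 by metis+
  moreover have "w2 \<noteq> w3"
  proof
    assume "w2 = w3"
    then have "on_line L1 w2" using w3 by simp
    then show False
      using common_point_unique[of L1 L3 v w2] parallel_common_point_eq[OF lines _ v(1,3)]
        \<open>v \<noteq> w2\<close> dist v(1,3) w2(1) by blast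
  qed
  ultimately have "\<not> on_line_thru v w2 w3"
    using vertex_not_on_line_thru_neighbours[OF _ v(1) w3(2,1) w2(2)] np(4) parallel_sym by blast
  moreover have "on_line_thru v w3 z" using d2 eq unfolding v_def w3_def by simp
  ultimately show ?thesis using on_line_thru_unique_meet d1 unfolding v_def w2_def by blast
qed

lemma bisector_det_change_of_basis:
  "(fst p * snd q - snd p * fst q) * bisector_det A B A' B' z =
     mid_form A A' z p * mid_form B B' z q - mid_form A A' z q * mid_form B B' z p"
  unfolding bisector_det_def mid_form_def dir_form_def fst_conv snd_conv by algebra

lemma bisector_det_eq_0_at_diagonal_intersection:
  fixes A B A' B' :: "('a::field) line"
  assumes on: "on_line A v0" "on_line B v0" "on_line B v1" "on_line A' v1"
    "on_line A' v2" "on_line B' v2" "on_line B' v3" "on_line A v3"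
    and v: "v0 = (fst z + fst p, snd z + snd p)" "v1 = (fst z + fst q, snd z + snd q)"
      "v2 = (fst z + s * fst p, snd z + s * snd p)" "v3 = (fst z + t * fst q, snd z + t * snd q)"
    and nz: "s \<noteq> 0" "t \<noteq> 0" "fst p * snd q - snd p * fst q \<noteq> 0"
  shows "bisector_det A B A' B' z = 0"
proof -
  have "line_eval A z + dir_form A p = 0" "line_eval B z + dir_form B p = 0"
    "line_eval B z + dir_form B q = 0" "line_eval A' z + dir_form A' q = 0"
    "line_eval A' z + s * dir_form A' p = 0" "line_eval B' z + s * dir_form B' p = 0"
    "line_eval B' z + t * dir_form B' q = 0" "line_eval A z + t * dir_form A q = 0"
    using on line_eval_along[of _ z 1] line_eval_along[of _ z s p] line_eval_along[of _ z t q]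
    unfolding v by (simp_all add: on_line_iff_line_eval)
  \<comment> \<open>so in the basis \<open>p, q\<close> both midpoint forms at \<open>z\<close> are multiples of
      \<open>((1 + s) / s, (1 + t) / t)\<close>\<close>
  then have forms: "s * mid_form A A' z p = - (1 + s) * (line_eval A z * line_eval A' z)"
    "t * mid_form A A' z q = - (1 + t) * (line_eval A z * line_eval A' z)"
    "s * mid_form B B' z p = - (1 + s) * (line_eval B z * line_eval B' z)"
    "t * mid_form B B' z q = - (1 + t) * (line_eval B z * line_eval B' z)"
    unfolding mid_form_def by algebra+
  have "s * t * ((fst p * snd q - snd p * fst q) * bisector_det A B A' B' z)
      = (s * mid_form A A' z p) * (t * mid_form B B' z q)
        - (t * mid_form A A' z q) * (s * mid_form B B' z p)"
    unfolding bisector_det_change_of_basis by algebra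
  also have "\<dots> = 0"
    unfolding forms by algebra
  finally have "s * t * ((fst p * snd q - snd p * fst q) * bisector_det A B A' B' z) = 0" .
  with nz show ?thesis by simp
qed

lemma bisector_det_proper_diagonals:
  fixes A B A' B' :: "('a::field) line"
  assumes quad: "quadrilateral A B A' B'"
    and proper: "meet A B \<noteq> meet B A'" "meet B A' \<noteq> meet A' B'"
      "meet A' B' \<noteq> meet B' A" "meet B' A \<noteq> meet A B"
    and d1: "on_line_thru (meet A B) (meet A' B') z"
    and d2: "on_line_thru (meet B A') (meet B' A) z"
  shows "bisector_det A B A' B' z = 0"
proof -
  have np: "\<not> parallel A B" "\<not> parallel B A'" "\<not> parallel A' B'" "\<not> parallel B' A"
    using quad unfolding quadrilateral_def by auto
  then have np': "\<not> parallel B A" "\<not> parallel A' B" "\<not> parallel B' A'" "\<not> parallel A B'"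
    using parallel_sym by blast+
  define v0 v1 v2 v3
    where "v0 = meet A B" and "v1 = meet B A'" and "v2 = meet A' B'" and "v3 = meet B' A"
  have on: "on_line A v0" "on_line B v0" "on_line B v1" "on_line A' v1"
    "on_line A' v2" "on_line B' v2" "on_line B' v3" "on_line A v3"
    using on_line_meet[OF np(1)] on_line_meet[OF np(2)] on_line_meet[OF np(3)] on_line_meet[OF np(4)]
    unfolding v0_def v1_def v2_def v3_def by auto
  have ne: "v0 \<noteq> v1" "v1 \<noteq> v2" "v2 \<noteq> v3" "v3 \<noteq> v0"
    using proper unfolding v0_def v1_def v2_def v3_def by auto
  have "\<not> on_line_thru v1 v3 v0"
    using vertex_not_on_line_thru_neighbours[OF np'(1) on(3,2,1,8)] ne by auto
  moreover have "\<not> on_line_thru v0 v2 v1"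
    using vertex_not_on_line_thru_neighbours[OF np(2) on(2,3,4,5)] ne by auto
  moreover have "\<not> on_line_thru v1 v3 v2"
    using vertex_not_on_line_thru_neighbours[OF np(3) on(4,5,6,7)] ne by auto
  moreover have "\<not> on_line_thru v0 v2 v3"
    using vertex_not_on_line_thru_neighbours[OF np'(4) on(1,8,7,6)] ne by auto
  moreover have "on_line_thru v0 v2 z" "on_line_thru v1 v3 z"
    using d1 d2 unfolding v0_def v1_def v2_def v3_def .
  ultimately have z: "z \<noteq> v0" "z \<noteq> v1" "z \<noteq> v2" "z \<noteq> v3"
    and col: "\<not> on_line_thru v0 v2 v1"
    by auto
  have "on_line_thru z v0 v2" "on_line_thru z v1 v3"
    using d1 d2 on_line_thru_swap12 on_line_thru_swap23
    unfolding v0_def v1_def v2_def v3_def by blast+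
  then obtain s t where
    s: "fst v2 - fst z = s * (fst v0 - fst z)" "snd v2 - snd z = s * (snd v0 - snd z)" and
    t: "fst v3 - fst z = t * (fst v1 - fst z)" "snd v3 - snd z = t * (snd v1 - snd z)"
    using on_line_thru_param z(1,2) by metis
  define p q where "p = (fst v0 - fst z, snd v0 - snd z)" and "q = (fst v1 - fst z, snd v1 - snd z)"
  have v: "v0 = (fst z + fst p, snd z + snd p)" "v1 = (fst z + fst q, snd z + snd q)"
    "v2 = (fst z + s * fst p, snd z + s * snd p)" "v3 = (fst z + t * fst q, snd z + t * snd q)"
    using s t by (simp_all add: p_def q_def prod_eq_iff algebra_simps)
  have "s \<noteq> 0" "t \<noteq> 0" using s t z(3,4) by (auto simp: prod_eq_iff)
  moreover have "fst p * snd q - snd p * fst q \<noteq> 0"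
  proof
    assume "fst p * snd q - snd p * fst q = 0"
    with s have "on_line_thru v0 v2 v1" unfolding on_line_thru_def p_def q_def fst_conv snd_conv
      by algebra
    with col show False ..
  qed
  ultimately show ?thesis using bisector_det_eq_0_at_diagonal_intersection[OF on v] by blast
qed

lemma bisector_det_diagonal_point:
  fixes A B A' B' :: "('a::field) line"
  assumes quad: "quadrilateral A B A' B'" and diag: "affine_diagonal_point A B A' B' z"
  shows "bisector_det A B A' B' z = 0"
proof -
  have np: "\<not> parallel A B" "\<not> parallel B A'" "\<not> parallel A' B'" "\<not> parallel B' A"
    using quad unfolding quadrilateral_def by auto
  from diag consider (sides) "(on_line A z \<and> on_line A' z) \<or> (on_line B z \<and> on_line B' z)"
    | (d) "on_line_thru (meet A B) (meet A' B') z" "on_line_thru (meet B A') (meet B' A) z"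
    unfolding affine_diagonal_point_def by blast
  then show ?thesis
  proof cases
    case sides
    then show ?thesis by (rule bisector_det_eq_0_if_on_opposite_sides)
  next
    case d
    have d': "on_line_thru (meet A' B') (meet A B) z" "on_line_thru (meet B' A) (meet B A') z"
      using d on_line_thru_swap12 by blast+
    have quads: "quadrilateral B A' B' A" "quadrilateral A' B' A B" "quadrilateral B' A B A'"
      using quad quadrilateral_rotate by blast+
    consider (v01) "meet A B = meet B A'" | (v12) "meet B A' = meet A' B'"
      | (v23) "meet A' B' = meet B' A" | (v30) "meet B' A = meet A B"
      | (proper) "meet A B \<noteq> meet B A'" "meet B A' \<noteq> meet A' B'"
          "meet A' B' \<noteq> meet B' A" "meet B' A \<noteq> meet A B"
      by blast
    then show ?thesis
    proof cases
      case v01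
      with improper_diagonals_meet[OF quad v01 d] on_line_meet[OF np(1)] on_line_meet[OF np(2)]
      show ?thesis by (intro bisector_det_eq_0_if_on_opposite_sides) simp
    next
      case v12
      with improper_diagonals_meet[OF quads(1) v12 d(2) d'(1)]
        on_line_meet[OF np(2)] on_line_meet[OF np(3)]
      show ?thesis by (intro bisector_det_eq_0_if_on_opposite_sides) simp
    next
      case v23
      with improper_diagonals_meet[OF quads(2) v23 d'] on_line_meet[OF np(3)] on_line_meet[OF np(4)]
      show ?thesis by (intro bisector_det_eq_0_if_on_opposite_sides) simp
    next
      case v30
      with improper_diagonals_meet[OF quads(3) v30 d'(2) d(1)]
        on_line_meet[OF np(4)] on_line_meet[OF np(1)]
      show ?thesis by (intro bisector_det_eq_0_if_on_opposite_sides) simp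
    next
      case proper
      then show ?thesis by (rule bisector_det_proper_diagonals[OF quad _ _ _ _ d])
    qed
  qed
qed

theorem theorem5p1:
  fixes A B A' B' :: "'a::field line" and a b h k :: 'a
  assumes char: "(2::'a) \<noteq> 0"
    and quad: "quadrilateral A B A' B'"
    and cen: "centroid A B A' B' = (h, k)"
    and diag: "affine_diagonal_point A B A' B' (a, b)"
  shows "bisector_locus A B A' B' =
           Aff ` {(x, y). PhiQ A B A' B' (x - h) (y - k) = PhiQ A B A' B' (a - h) (b - k)}"
proof -
  have "bisector_det A B A' B' (a, b) = 0"
    using bisector_det_diagonal_point[OF quad diag] .
  then have "bisector_det A B A' B' (x, y)
      = 2 * (PhiQ A B A' B' (a - h) (b - k) - PhiQ A B A' B' (x - h) (y - k))" for x y
    using bisector_det_centroid[OF char quad cen, of a b]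
      bisector_det_centroid[OF char quad cen, of x y]
    by (simp add: algebra_simps)
  with char have "{P. bisector_det A B A' B' P = 0} =
      {(x, y). PhiQ A B A' B' (x - h) (y - k) = PhiQ A B A' B' (a - h) (b - k)}"
    by auto
  then show ?thesis using bisector_locus_eq_det_zeros[OF char quad] by simp
qed

end
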